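(* For each $m$, let $\mathbf{p}=(p_1,\dots,p_m)$ be a probability distribution on $m$ urns with $p_1\le p_2\le\dots\le p_m$, and let $\alpha_j=\sum_{i=1}^m p_i^j$. Let $B$ be the number of balls thrown independently into the urns according to $\mathbf{p}$ until some urn contains two balls. Assume there exists $\tau=\tau(\mathbf{p})>0$ such that (A) $p_m\tau<1$; (B) $\sqrt{\alpha_2}\,\tau\to+\infty$ as $m\to\infty$; (C) $\sqrt[3]{\alpha_3}\,\tau\to0$ as $m\to\infty$. Then, as $m\to\infty$, \[ E(B)=\sqrt{\frac{\pi}{2\alpha_2}}\,(1+o(1)). \] *)

theory Defs
  imports "HOL-Probability.Probability" "HOL-Library.Landau_Symbols"
begin

definition urn_pmf :: "(nat \<Rightarrow> real) \<Rightarrow> nat \<Rightarrow> nat pmf" where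
  "urn_pmf p m = embed_pmf (\<lambda>i. if i \<in> {1..m} then p i else 0)"

text \<open>Balls are thrown at times 0,1,2,...; omega k is the urn of ball k.
  B = number of balls thrown until some urn contains two balls
    = least n such that two among the first n balls share an urn.\<close>
definition first_collision :: "(nat \<Rightarrow> nat) \<Rightarrow> nat" where
  "first_collision \<omega> = (LEAST n. \<exists>i j. i < j \<and> j < n \<and> \<omega> i = \<omega> j)"

definition ball_space :: "(nat \<Rightarrow> real) \<Rightarrow> nat \<Rightarrow> (nat \<Rightarrow> nat) measure" where
  "ball_space p m = (\<Pi>\<^sub>M k\<in>(UNIV::nat set). measure_pmf (urn_pmf p m))"

definition expected_B :: "(nat \<Rightarrow> real) \<Rightarrow> nat \<Rightarrow> real" where
  "expected_B p m = (\<integral>\<omega>. real (first_collision \<omega>) \<partial>(ball_space p m))"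

definition alpha :: "(nat \<Rightarrow> real) \<Rightarrow> nat \<Rightarrow> nat \<Rightarrow> real" where
  "alpha p m j = (\<Sum>i=1..m. p i ^ j)"

end

(* If the balls are independent, B > k exactly when the first k balls land in distinct urns, so
   E(B) = sum_k P(B > k) = sum over sets S of urns of |S|! * prod_{i in S} p_i.  Writing
   |S|! = integral_0^oo t^|S| e^-t dt turns this into the Poissonization integral
   E(B) = integral_0^oo e^-t * prod_i (1 + p_i t) dt.
   The bounds x - x^2/2 <= ln (1 + x) <= x - x^2/2 + x^3/3 squeeze the integrand between
   exp(-alpha_2 t^2/2) and exp(-alpha_2 t^2/2 + alpha_3 t^3/3); integrating the lower one gives
   E(B) >= sqrt(pi/(2 alpha_2)).  For the upper bound split at tau: on [0, tau] the cubic term costs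
   at most the factor exp(alpha_3 tau^3/3), which tends to 1 by (C); beyond tau, (A) makes the
   integrand decay like exp(-alpha_2 tau (t - tau)/2), which contributes 2/(alpha_2 tau), and this
   is o(1/sqrt alpha_2) by (B). *)

theory Submission
  imports Defs
begin

lemma ln_add_one_ge_quadratic:
  fixes x :: real
  assumes "x \<ge> 0"
  shows "x - x^2/2 \<le> ln (1 + x)"
proof -
  let ?g = "\<lambda>y::real. ln (1 + y) - y + y^2/2"
  have "?g 0 \<le> ?g x"
  proof (rule deriv_nonneg_imp_mono[where g = ?g and g' = "\<lambda>y. y^2 / (1 + y)"])
    fix y :: real assume "y \<in> {0..x}"
    then have "y \<ge> 0" by simp
    then show "(?g has_real_derivative y^2 / (1 + y)) (at y)"
      by (auto intro!: derivative_eq_intros simp: field_simps power2_eq_square)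
    show "y^2 / (1 + y) \<ge> 0" using \<open>y \<ge> 0\<close> by simp
  qed (use assms in auto)
  then show ?thesis by simp
qed

lemma ln_add_one_le_cubic:
  fixes x :: real
  assumes "x \<ge> 0"
  shows "ln (1 + x) \<le> x - x^2/2 + x^3/3"
proof -
  let ?g = "\<lambda>y::real. y - y^2/2 + y^3/3 - ln (1 + y)"
  have "?g 0 \<le> ?g x"
  proof (rule deriv_nonneg_imp_mono[where g = ?g and g' = "\<lambda>y. y^3 / (1 + y)"])
    fix y :: real assume "y \<in> {0..x}"
    then have "y \<ge> 0" by simp
    then show "(?g has_real_derivative y^3 / (1 + y)) (at y)"
      by (auto intro!: derivative_eq_intros simp: field_simps power2_eq_square power3_eq_cube)
    show "y^3 / (1 + y) \<ge> 0" using \<open>y \<ge> 0\<close> by simp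
  qed (use assms in auto)
  then show ?thesis by simp
qed

(* Summed over the urns, the rate x - x^2 s/2 becomes 1 - alpha_2 s/2, so the factor exp(-t)
   leaves exponential decay at rate alpha_2 s/2 beyond s. *)
lemma one_plus_mult_le_shifted:
  fixes x s t :: real
  assumes x: "0 \<le> x" "x * s \<le> 1" and s: "0 \<le> s" "s \<le> t"
  shows "1 + x * t \<le> (1 + x * s) * exp ((x - x^2 * s / 2) * (t - s))"
proof -
  have pos: "1 + x * s > 0" using x s by (simp add: add_pos_nonneg)
  have "1 / (1 + x * s) \<le> 1 - x * s / 2"
  proof -
    have "0 \<le> (x * s) * (1 - x * s)" using x s by simp
    then have "1 \<le> (1 - x * s / 2) * (1 + x * s)" by (simp add: algebra_simps power2_eq_square)
    then show ?thesis using pos by (simp add: divide_le_eq)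
  qed
  then have "x * (t - s) * (1 / (1 + x * s)) \<le> x * (t - s) * (1 - x * s / 2)"
    using x s by (intro mult_left_mono) auto
  then have slope: "x * (t - s) / (1 + x * s) \<le> (x - x^2 * s / 2) * (t - s)"
    by (simp add: field_simps power2_eq_square)
  have "1 + x * t = (1 + x * s) * (1 + x * (t - s) / (1 + x * s))"
    using pos by (simp add: field_simps)
  also have "\<dots> \<le> (1 + x * s) * exp (x * (t - s) / (1 + x * s))"
    using pos by (intro mult_left_mono exp_ge_add_one_self) auto
  also have "\<dots> \<le> (1 + x * s) * exp ((x - x^2 * s / 2) * (t - s))"
    using pos slope by (intro mult_left_mono) auto
  finally show ?thesis .
qed

lemma nn_integral_gaussian_Ici:
  fixes a :: real
  assumes a: "a > 0"
  shows "(\<integral>\<^sup>+t\<in>{0..}. ennreal (exp (- a * t^2 / 2)) \<partial>lborel) = ennreal (sqrt (pi / (2 * a)))"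
proof -
  define c where "c = sqrt (a / 2)"
  have c: "c > 0" using a by (simp add: c_def)
  let ?f = "\<lambda>x::real. ennreal (indicator {0..} x * exp (- (x^2)))"
  have "(\<integral>\<^sup>+x. ?f x \<partial>lborel) = ennreal (sqrt pi / 2)"
    using gaussian_moment_0 by (subst nn_integral_eq_integrable) (auto simp: has_bochner_integral_iff)
  then have "ennreal (sqrt pi / 2) = (\<integral>\<^sup>+x. ?f x \<partial>lborel)" ..
  also have "\<dots> = ennreal c * (\<integral>\<^sup>+x. ?f (0 + c * x) \<partial>lborel)"
    using c by (subst nn_integral_real_affine[where c = c and t = 0]) auto
  also have "(\<lambda>x. ?f (0 + c * x)) = (\<lambda>t. ennreal (exp (- a * t^2 / 2)) * indicator {0..} t)"
  proof
    fix t :: real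
    have "(c * t)^2 = a * t^2 / 2" using a by (simp add: c_def power_mult_distrib)
    moreover have "(0 \<le> c * t) = (0 \<le> t)" using c by (simp add: zero_le_mult_iff)
    ultimately show "?f (0 + c * t) = ennreal (exp (- a * t^2 / 2)) * indicator {0..} t"
      by (simp add: indicator_def)
  qed
  finally have "ennreal (sqrt pi / 2) / ennreal c
      = ((\<integral>\<^sup>+t\<in>{0..}. ennreal (exp (- a * t^2 / 2)) \<partial>lborel) * ennreal c) / ennreal c"
    by (simp only: mult.commute)
  then have "(\<integral>\<^sup>+t\<in>{0..}. ennreal (exp (- a * t^2 / 2)) \<partial>lborel) = ennreal (sqrt pi / 2) / ennreal c"
    using c by (simp add: ennreal_mult_divide_eq)
  also have "\<dots> = ennreal (sqrt (pi / (2 * a)))"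
    using a c by (simp add: divide_ennreal c_def real_sqrt_divide real_sqrt_mult field_simps)
  finally show ?thesis .
qed

lemma nn_integral_exp_Ici:
  fixes b s :: real
  assumes b: "b > 0"
  shows "(\<integral>\<^sup>+t\<in>{s..}. ennreal (exp (- b * (t - s))) \<partial>lborel) = ennreal (1 / b)"
proof -
  let ?g = "\<lambda>t::real. ennreal (exp (- b * (t - s))) * indicator {s..} t"
  have "(\<integral>\<^sup>+t. ?g t \<partial>lborel) = ennreal (1 / b) * (\<integral>\<^sup>+x. ?g (s + (1 / b) * x) \<partial>lborel)"
    using b by (subst nn_integral_real_affine[where c = "1 / b" and t = s]) auto
  also have "(\<lambda>x. ?g (s + (1 / b) * x)) = (\<lambda>x. ennreal (x^0 * exp (- x)) * indicator {0..} x)"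
    using b by (auto simp: indicator_def zero_le_divide_iff)
  also have "(\<integral>\<^sup>+x. ennreal (x^0 * exp (- x)) * indicator {0..} x \<partial>lborel) = 1"
    using nn_intergal_power_times_exp_Ici[of 0] by simp
  finally show ?thesis by simp
qed

lemma prod_one_plus_mult_eq_sum_subsets:
  fixes q :: "'a \<Rightarrow> 'b::comm_semiring_1"
  assumes "finite A"
  shows "(\<Prod>i\<in>A. 1 + q i * t) = (\<Sum>S\<in>Pow A. prod q S * t ^ card S)"
proof -
  have "(\<Prod>i\<in>A. 1 + q i * t) = (\<Prod>i\<in>A. q i * t + 1)" by (simp add: add.commute)
  also have "\<dots> = (\<Sum>S\<in>Pow A. (\<Prod>i\<in>S. q i * t) * (\<Prod>i\<in>A - S. 1))"
    using assms by (rule prod_add)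
  also have "\<dots> = (\<Sum>S\<in>Pow A. prod q S * t ^ card S)"
    by (simp add: prod.distrib)
  finally show ?thesis .
qed

section \<open>The first collision and injective prefixes\<close>

lemma ex_collision_iff_not_inj_on:
  "(\<exists>i j. i < j \<and> j < (n::nat) \<and> \<omega> i = \<omega> j) \<longleftrightarrow> \<not> inj_on \<omega> {..<n}"
proof
  assume "\<exists>i j. i < j \<and> j < n \<and> \<omega> i = \<omega> j"
  then obtain i j where "i < j" "j < n" "\<omega> i = \<omega> j" by blast
  then have "i \<in> {..<n}" "j \<in> {..<n}" "i \<noteq> j" "\<omega> i = \<omega> j" by auto
  then show "\<not> inj_on \<omega> {..<n}" unfolding inj_on_def by blast
next
  assume "\<not> inj_on \<omega> {..<n}"
  then obtain i j where "i < n" "j < n" "i \<noteq> j" "\<omega> i = \<omega> j" by (auto simp: inj_on_def)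
  then show "\<exists>i j. i < j \<and> j < n \<and> \<omega> i = \<omega> j" by (metis linorder_neqE_nat)
qed

lemma first_collision_eq_Least: "first_collision \<omega> = (LEAST n. \<not> inj_on \<omega> {..<n})"
  unfolding first_collision_def ex_collision_iff_not_inj_on ..

lemma less_first_collision_iff:
  assumes "\<not> inj_on \<omega> {..<n}"
  shows "k < first_collision \<omega> \<longleftrightarrow> inj_on \<omega> {..<k}"
proof
  assume "k < first_collision \<omega>"
  then show "inj_on \<omega> {..<k}" unfolding first_collision_eq_Least by (blast dest: not_less_Least)
next
  assume inj: "inj_on \<omega> {..<k}"
  have "\<not> inj_on \<omega> {..<first_collision \<omega>}"
    unfolding first_collision_eq_Least using assms by (rule LeastI)
  with inj show "k < first_collision \<omega>" by (meson inj_on_subset lessThan_subset_iff not_le)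
qed

lemma first_collision_le:
  assumes "\<not> inj_on \<omega> {..<n}"
  shows "first_collision \<omega> \<le> n"
  unfolding first_collision_eq_Least using assms by (rule Least_le)

lemma not_inj_on_lessThan_Suc:
  assumes "\<And>i. \<omega> i \<in> {1..m}"
  shows "\<not> inj_on \<omega> {..<Suc m}"
proof
  assume "inj_on \<omega> {..<Suc m}"
  then have "card (\<omega> ` {..<Suc m}) = Suc m" by (simp add: card_image)
  moreover have "\<omega> ` {..<Suc m} \<subseteq> {1..m}" using assms by auto
  then have "card (\<omega> ` {..<Suc m}) \<le> card {1..m}" by (intro card_mono) auto
  ultimately show False by simp
qed

lemma first_collision_eq_sum_of_bool:
  assumes "\<And>i. \<omega> i \<in> {1..m}"
  shows "real (first_collision \<omega>) = (\<Sum>k\<le>m. of_bool (inj_on \<omega> {..<k}))"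
proof -
  note not_inj = not_inj_on_lessThan_Suc[of \<omega>, OF assms]
  have "k \<in> {..m} \<inter> {k. inj_on \<omega> {..<k}} \<longleftrightarrow> k \<in> {..<first_collision \<omega>}" for k
    using less_first_collision_iff[OF not_inj, of k] first_collision_le[OF not_inj] by auto
  then have "{..m} \<inter> {k. inj_on \<omega> {..<k}} = {..<first_collision \<omega>}" by blast
  then show ?thesis by simp
qed

definition inj_seqs :: "nat \<Rightarrow> nat \<Rightarrow> (nat \<Rightarrow> nat) set" where
  "inj_seqs m k = {f \<in> {..<k} \<rightarrow>\<^sub>E {1..m}. inj_on f {..<k}}"

lemma finite_inj_seqs: "finite (inj_seqs m k)"
  unfolding inj_seqs_def by (rule finite_subset[of _ "{..<k} \<rightarrow>\<^sub>E {1..m}"]) (auto intro: finite_PiE)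

lemma sum_inj_seqs_indicator:
  assumes "\<And>i. \<omega> i \<in> {1..m}"
  shows "(\<Sum>f\<in>inj_seqs m k. indicator {\<omega>. \<forall>i\<in>{..<k}. \<omega> i = f i} \<omega>) = (of_bool (inj_on \<omega> {..<k}) :: real)"
proof -
  have "(\<forall>i\<in>{..<k}. \<omega> i = f i) \<longleftrightarrow> restrict \<omega> {..<k} = f" if "f \<in> inj_seqs m k" for f
    using that unfolding inj_seqs_def by (auto simp: PiE_def extensional_def fun_eq_iff)
  then have "(\<Sum>f\<in>inj_seqs m k. indicator {\<omega>. \<forall>i\<in>{..<k}. \<omega> i = f i} \<omega>)
      = (\<Sum>f\<in>inj_seqs m k. if restrict \<omega> {..<k} = f then 1 else (0::real))"
    by (intro sum.cong) (auto simp: indicator_def)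
  also have "\<dots> = of_bool (restrict \<omega> {..<k} \<in> inj_seqs m k)"
    by (simp add: sum.delta finite_inj_seqs)
  also have "restrict \<omega> {..<k} \<in> inj_seqs m k \<longleftrightarrow> inj_on \<omega> {..<k}"
    using assms unfolding inj_seqs_def by auto
  finally show ?thesis .
qed

lemma card_inj_PiE_eq_fact:
  assumes "finite S" "card S = k"
  shows "card {f \<in> {..<k} \<rightarrow>\<^sub>E S. inj_on f {..<k}} = fact k"
proof -
  have "card {f \<in> {..<k} \<rightarrow>\<^sub>E S. inj_on f {..<k}}
        = card S ^ (card {..<k} - card {..<k}) * prod ((-) (card S)) {0..<card {..<k}}"
    by (rule card_inj_on_subset_funcset) (use assms in auto)
  also have "\<dots> = (\<Prod>i = 0..<k. k - i)" using assms by simp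
  also have "\<dots> = fact k" by (simp add: fact_prod_rev)
  finally show ?thesis .
qed

lemma inj_seqs_with_image:
  assumes "S \<subseteq> {1..m}" "card S = k"
  shows "{f \<in> inj_seqs m k. f ` {..<k} = S} = {f \<in> {..<k} \<rightarrow>\<^sub>E S. inj_on f {..<k}}"
proof (intro equalityI subsetI)
  fix f assume "f \<in> {f \<in> inj_seqs m k. f ` {..<k} = S}"
  then show "f \<in> {f \<in> {..<k} \<rightarrow>\<^sub>E S. inj_on f {..<k}}" unfolding inj_seqs_def by (auto simp: PiE_def)
next
  fix f assume f: "f \<in> {f \<in> {..<k} \<rightarrow>\<^sub>E S. inj_on f {..<k}}"
  then have "f ` {..<k} \<subseteq> S" "card (f ` {..<k}) = card S"
    using assms card_image[of f "{..<k}"] by (auto simp: PiE_def)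
  moreover have "finite S" using assms(1) finite_subset by blast
  ultimately have "f ` {..<k} = S" by (intro card_subset_eq)
  with f assms show "f \<in> {f \<in> inj_seqs m k. f ` {..<k} = S}" unfolding inj_seqs_def by (auto simp: PiE_def)
qed

lemma sum_inj_seqs_prod_eq_sum_subsets:
  "(\<Sum>f\<in>inj_seqs m k. \<Prod>i<k. q (f i)) = (\<Sum>S | S \<subseteq> {1..m} \<and> card S = k. fact k * prod q S)"
proof -
  let ?T = "{S. S \<subseteq> {1..m} \<and> card S = k}"
  have finite_T: "finite ?T" by (rule finite_subset[of _ "Pow {1..m}"]) auto
  have images_in_T: "(\<lambda>f. f ` {..<k}) ` inj_seqs m k \<subseteq> ?T"
  proof
    fix S assume "S \<in> (\<lambda>f. f ` {..<k}) ` inj_seqs m k"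
    then obtain f where "f \<in> inj_seqs m k" "S = f ` {..<k}" by blast
    then show "S \<in> ?T" unfolding inj_seqs_def using card_image[of f "{..<k}"] by auto
  qed
  have "(\<Sum>f\<in>inj_seqs m k. \<Prod>i<k. q (f i)) = (\<Sum>f\<in>inj_seqs m k. prod q (f ` {..<k}))"
    by (intro sum.cong refl) (simp add: inj_seqs_def prod.reindex)
  also have "\<dots> = (\<Sum>S\<in>?T. \<Sum>f | f \<in> inj_seqs m k \<and> f ` {..<k} = S. prod q (f ` {..<k}))"
    by (rule sum.group[symmetric, OF finite_inj_seqs finite_T images_in_T])
  also have "\<dots> = (\<Sum>S\<in>?T. fact k * prod q S)"
  proof (intro sum.cong refl)
    fix S assume S: "S \<in> ?T"
    then have "finite S" using finite_subset by blast
    have "(\<Sum>f | f \<in> inj_seqs m k \<and> f ` {..<k} = S. prod q (f ` {..<k}))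
        = (\<Sum>f | f \<in> inj_seqs m k \<and> f ` {..<k} = S. prod q S)"
      by (rule sum.cong) auto
    also have "\<dots> = of_nat (card {f \<in> {..<k} \<rightarrow>\<^sub>E S. inj_on f {..<k}}) * prod q S"
      using S by (simp add: inj_seqs_with_image)
    finally show "(\<Sum>f | f \<in> inj_seqs m k \<and> f ` {..<k} = S. prod q (f ` {..<k})) = fact k * prod q S"
      using S \<open>finite S\<close> by (simp add: card_inj_PiE_eq_fact)
  qed
  finally show ?thesis .
qed

section \<open>Expected collision time as a Poissonization integral\<close>

lemma space_ball_space: "space (ball_space q m) = UNIV"
  unfolding ball_space_def by (simp add: space_PiM PiE_def extensional_def)

lemma prob_space_ball_space: "prob_space (ball_space q m)"
  unfolding ball_space_def by (intro prob_space_PiM prob_space_measure_pmf)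

lemma measurable_first_collision:
  "first_collision \<in> measurable (ball_space q m) (count_space UNIV)"
proof -
  have eq: "(\<lambda>\<omega>::nat\<Rightarrow>nat. \<omega> i = \<omega> j) = (\<lambda>\<omega>. \<exists>v. \<omega> i = v \<and> \<omega> j = v)" for i j by auto
  have [measurable]: "(\<lambda>\<omega>::nat\<Rightarrow>nat. \<omega> i = \<omega> j) \<in> measurable (ball_space q m) (count_space UNIV)" for i j
    unfolding eq ball_space_def by measurable
  show ?thesis unfolding first_collision_def[abs_def] by measurable
qed

lemma sets_ball_space_prefix:
  "{\<omega>. \<forall>i\<in>{..<k}. \<omega> i = f i} \<in> sets (ball_space q m)"
proof -
  have "{\<omega>. \<forall>i\<in>{..<k}. \<omega> i = f i} = {\<omega>\<in>space (ball_space q m). \<forall>i\<in>{..<k}. \<omega> i \<in> {f i}}"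
    by (auto simp: space_ball_space)
  also have "\<dots> \<in> sets (ball_space q m)"
    unfolding ball_space_def by (intro sets.sets_Collect_finite_All sets_Collect_single') auto
  finally show ?thesis .
qed

(* With a Poisson(t) number of balls, urn i independently receives a Poisson(q i * t) number
   of them, so this is the probability that no urn receives two. *)
definition poisson_no_collision :: "(nat \<Rightarrow> real) \<Rightarrow> nat \<Rightarrow> real \<Rightarrow> real" where
  "poisson_no_collision q m t = exp (- t) * (\<Prod>i\<in>{1..m}. 1 + q i * t)"

locale urn_distribution =
  fixes q :: "nat \<Rightarrow> real" and m :: nat
  assumes nonneg: "i \<in> {1..m} \<Longrightarrow> q i \<ge> 0"
    and sum_eq_1: "(\<Sum>i=1..m. q i) = 1"
begin

lemma pmf_urn_pmf: "pmf (urn_pmf q m) i = (if i \<in> {1..m} then q i else 0)"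
  unfolding urn_pmf_def
proof (rule pmf_embed_pmf)
  show "0 \<le> (if i \<in> {1..m} then q i else 0)" for i using nonneg by auto
  have "(\<integral>\<^sup>+i. ennreal (if i \<in> {1..m} then q i else 0) \<partial>count_space UNIV)
      = (\<Sum>i\<in>{1..m}. ennreal (if i \<in> {1..m} then q i else 0))"
    by (rule nn_integral_count_space') auto
  also have "\<dots> = ennreal (\<Sum>i\<in>{1..m}. q i)" using nonneg by (subst sum_ennreal) auto
  also have "\<dots> = 1" using sum_eq_1 by simp
  finally show "(\<integral>\<^sup>+i. ennreal (if i \<in> {1..m} then q i else 0) \<partial>count_space UNIV) = 1" .
qed

lemma AE_ball_space_in_urns: "AE \<omega> in ball_space q m. \<forall>i. \<omega> i \<in> {1..m}"
proof -
  have "AE x in measure_pmf (urn_pmf q m). x \<in> {1..m}"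
    by (rule AE_pmfI) (auto simp: set_pmf_iff pmf_urn_pmf split: if_splits)
  then have "AE \<omega> in ball_space q m. \<omega> i \<in> {1..m}" for i
    unfolding ball_space_def by (intro AE_PiM_component) (auto simp: prob_space_measure_pmf)
  then show ?thesis by (simp add: AE_all_countable)
qed

lemma measure_ball_space_prefix:
  assumes "\<And>i. i < k \<Longrightarrow> f i \<in> {1..m}"
  shows "measure (ball_space q m) {\<omega>. \<forall>i\<in>{..<k}. \<omega> i = f i} = (\<Prod>i<k. q (f i))"
proof -
  let ?M = "measure_pmf (urn_pmf q m)"
  interpret product_prob_space "\<lambda>_. ?M" UNIV by unfold_locales
  have "{\<omega>. \<forall>i\<in>{..<k}. \<omega> i = f i} = {\<omega>\<in>space (ball_space q m). \<forall>i\<in>{..<k}. \<omega> i \<in> {f i}}"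
    by (auto simp: space_ball_space)
  then have "emeasure (ball_space q m) {\<omega>. \<forall>i\<in>{..<k}. \<omega> i = f i} = (\<Prod>i<k. emeasure ?M {f i})"
    unfolding ball_space_def by (simp only:) (rule emeasure_PiM_Collect; auto)
  also have "\<dots> = (\<Prod>i<k. ennreal (q (f i)))"
    using assms by (simp add: emeasure_pmf_single pmf_urn_pmf)
  also have "\<dots> = ennreal (\<Prod>i<k. q (f i))"
    using assms nonneg by (intro prod_ennreal) auto
  finally have "emeasure (ball_space q m) {\<omega>. \<forall>i\<in>{..<k}. \<omega> i = f i} = ennreal (\<Prod>i<k. q (f i))" .
  moreover have "(\<Prod>i<k. q (f i)) \<ge> 0"
    using assms nonneg by (intro prod_nonneg) auto
  ultimately show ?thesis by (simp add: measure_def)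
qed

lemma expected_B_eq_sum_inj_seqs:
  "expected_B q m = (\<Sum>k\<le>m. \<Sum>f\<in>inj_seqs m k. \<Prod>i<k. q (f i))"
proof -
  interpret prob_space "ball_space q m" by (rule prob_space_ball_space)
  let ?C = "\<lambda>f k. {\<omega>. \<forall>i\<in>{..<k}. \<omega> i = f i}"
  have sets_C: "?C f k \<in> sets (ball_space q m)" for f k by (rule sets_ball_space_prefix)
  have "AE \<omega> in ball_space q m. real (first_collision \<omega>) = (\<Sum>k\<le>m. \<Sum>f\<in>inj_seqs m k. indicator (?C f k) \<omega>)"
    using AE_ball_space_in_urns
    by eventually_elim (simp add: first_collision_eq_sum_of_bool sum_inj_seqs_indicator del: sum_of_bool_eq)
  then have "expected_B q m = (\<integral>\<omega>. (\<Sum>k\<le>m. \<Sum>f\<in>inj_seqs m k. indicator (?C f k) \<omega> :: real) \<partial>ball_space q m)"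
    unfolding expected_B_def
    using measurable_compose[OF measurable_first_collision, of real] sets_C
    by (intro integral_cong_AE) auto
  also have "\<dots> = (\<Sum>k\<le>m. \<Sum>f\<in>inj_seqs m k. measure (ball_space q m) (?C f k))"
    using sets_C by (simp add: Bochner_Integration.integral_sum integrable_real_indicator emeasure_eq_measure)
  also have "\<dots> = (\<Sum>k\<le>m. \<Sum>f\<in>inj_seqs m k. \<Prod>i<k. q (f i))"
  proof (intro sum.cong refl)
    fix k f assume "f \<in> inj_seqs m k"
    then have "\<And>i. i < k \<Longrightarrow> f i \<in> {1..m}" unfolding inj_seqs_def by (blast intro: PiE_mem)
    then show "measure (ball_space q m) (?C f k) = (\<Prod>i<k. q (f i))"
      by (rule measure_ball_space_prefix)
  qed
  finally show ?thesis .
qed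

lemma expected_B_eq_sum_subsets:
  "expected_B q m = (\<Sum>S\<in>Pow {1..m}. fact (card S) * prod q S)"
proof -
  have "expected_B q m = (\<Sum>k\<le>m. \<Sum>S | S \<subseteq> {1..m} \<and> card S = k. fact (card S) * prod q S)"
    unfolding expected_B_eq_sum_inj_seqs sum_inj_seqs_prod_eq_sum_subsets by (intro sum.cong) auto
  also have "\<dots> = (\<Sum>k\<le>m. \<Sum>S\<in>{S \<in> Pow {1..m}. card S = k}. fact (card S) * prod q S)"
    by (intro sum.cong) auto
  also have "\<dots> = (\<Sum>S\<in>Pow {1..m}. fact (card S) * prod q S)"
  proof (rule sum.group)
    show "card ` Pow {1..m} \<subseteq> {..m}"
    proof
      fix n assume "n \<in> card ` Pow {1..m}"
      then obtain S where "S \<subseteq> {1..m}" "n = card S" by blast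
      then show "n \<in> {..m}" using card_mono[of "{1..m}" S] by simp
    qed
  qed auto
  finally show ?thesis .
qed

lemma expected_B_eq_nn_integral:
  "ennreal (expected_B q m) = (\<integral>\<^sup>+t\<in>{0..}. ennreal (poisson_no_collision q m t) \<partial>lborel)"
proof -
  have prod_q_nonneg: "S \<in> Pow {1..m} \<Longrightarrow> prod q S \<ge> 0" for S
    using nonneg by (auto intro!: prod_nonneg)
  have expand: "ennreal (poisson_no_collision q m t) * indicator {0..} t
      = (\<Sum>S\<in>Pow {1..m}. ennreal (prod q S) * (ennreal (t ^ card S * exp (- t)) * indicator {0..} t))" for t
  proof (cases "t \<ge> 0")
    case True
    have "poisson_no_collision q m t = exp (- t) * (\<Sum>S\<in>Pow {1..m}. prod q S * t ^ card S)"
      unfolding poisson_no_collision_def by (simp add: prod_one_plus_mult_eq_sum_subsets)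
    also have "\<dots> = (\<Sum>S\<in>Pow {1..m}. prod q S * (t ^ card S * exp (- t)))"
      by (simp add: sum_distrib_left mult_ac)
    finally have "poisson_no_collision q m t = (\<Sum>S\<in>Pow {1..m}. prod q S * (t ^ card S * exp (- t)))" .
    then have "ennreal (poisson_no_collision q m t)
        = (\<Sum>S\<in>Pow {1..m}. ennreal (prod q S * (t ^ card S * exp (- t))))"
      using True prod_q_nonneg by (subst sum_ennreal) auto
    also have "\<dots> = (\<Sum>S\<in>Pow {1..m}. ennreal (prod q S) * ennreal (t ^ card S * exp (- t)))"
      using True prod_q_nonneg by (intro sum.cong refl ennreal_mult) auto
    finally show ?thesis using True by simp
  qed simp
  have "(\<integral>\<^sup>+t\<in>{0..}. ennreal (poisson_no_collision q m t) \<partial>lborel)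
      = (\<Sum>S\<in>Pow {1..m}. ennreal (prod q S) * ennreal (fact (card S)))"
    unfolding expand
    by (subst nn_integral_sum) (auto simp: nn_integral_cmult nn_intergal_power_times_exp_Ici)
  also have "\<dots> = (\<Sum>S\<in>Pow {1..m}. ennreal (fact (card S) * prod q S))"
    using prod_q_nonneg by (intro sum.cong refl) (simp add: ennreal_mult[symmetric] mult.commute)
  also have "\<dots> = ennreal (expected_B q m)"
    using prod_q_nonneg by (subst sum_ennreal) (auto simp: expected_B_eq_sum_subsets)
  finally show ?thesis ..
qed

section \<open>Bounds on the Poissonized no-collision probability\<close>

lemma alpha_2_pos: "alpha q m 2 > 0"
proof -
  obtain i where "i \<in> {1..m}" "q i \<noteq> 0"
    using sum_eq_1 by (metis sum.neutral zero_neq_one)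
  then show ?thesis unfolding alpha_def by (intro sum_pos2) auto
qed

lemma alpha_3_nonneg: "alpha q m 3 \<ge> 0"
  unfolding alpha_def using nonneg by (intro sum_nonneg) auto

lemma sum_taylor_terms:
  "(\<Sum>i=1..m. q i * t - (q i * t)^2/2 + c * (q i * t)^3) = t - alpha q m 2 * t^2/2 + c * alpha q m 3 * t^3"
proof -
  have "(\<Sum>i=1..m. q i * t - (q i * t)^2/2 + c * (q i * t)^3)
      = (\<Sum>i=1..m. q i) * t - (\<Sum>i=1..m. q i^2) * t^2/2 + c * (\<Sum>i=1..m. q i^3) * t^3"
    by (simp add: sum.distrib sum_subtractf sum_distrib_left sum_distrib_right sum_divide_distrib
        power_mult_distrib mult_ac)
  then show ?thesis using sum_eq_1 by (simp add: alpha_def)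
qed

lemma poisson_no_collision_ge:
  assumes "t \<ge> 0"
  shows "exp (- alpha q m 2 * t^2/2) \<le> poisson_no_collision q m t"
proof -
  have "exp (t - alpha q m 2 * t^2/2) = (\<Prod>i\<in>{1..m}. exp (q i * t - (q i * t)^2/2))"
    using sum_taylor_terms[of t 0] by (simp add: exp_sum[symmetric])
  also have "\<dots> \<le> (\<Prod>i\<in>{1..m}. 1 + q i * t)"
  proof (intro prod_mono conjI)
    fix i assume "i \<in> {1..m}"
    then have "q i * t \<ge> 0" using nonneg assms by simp
    then have "exp (q i * t - (q i * t)^2/2) \<le> exp (ln (1 + q i * t))"
      by (subst exp_le_cancel_iff) (rule ln_add_one_ge_quadratic)
    also have "\<dots> = 1 + q i * t" using \<open>q i * t \<ge> 0\<close> by simp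
    finally show "exp (q i * t - (q i * t)^2/2) \<le> 1 + q i * t" .
  qed simp
  finally have "exp (- t) * exp (t - alpha q m 2 * t^2/2) \<le> exp (- t) * (\<Prod>i\<in>{1..m}. 1 + q i * t)"
    by simp
  then show ?thesis
    unfolding poisson_no_collision_def by (simp add: exp_add[symmetric])
qed

lemma poisson_no_collision_le:
  assumes "t \<ge> 0"
  shows "poisson_no_collision q m t \<le> exp (- alpha q m 2 * t^2/2 + alpha q m 3 * t^3/3)"
proof -
  have "(\<Prod>i\<in>{1..m}. 1 + q i * t) \<le> (\<Prod>i\<in>{1..m}. exp (q i * t - (q i * t)^2/2 + (1/3) * (q i * t)^3))"
  proof (intro prod_mono conjI)
    fix i assume "i \<in> {1..m}"
    then have "q i * t \<ge> 0" using nonneg assms by simp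
    then have "1 + q i * t = exp (ln (1 + q i * t))" by simp
    also have "\<dots> \<le> exp (q i * t - (q i * t)^2/2 + (1/3) * (q i * t)^3)"
      using ln_add_one_le_cubic[OF \<open>q i * t \<ge> 0\<close>] by simp
    finally show "1 + q i * t \<le> exp (q i * t - (q i * t)^2/2 + (1/3) * (q i * t)^3)" .
    show "0 \<le> 1 + q i * t" using \<open>q i * t \<ge> 0\<close> by simp
  qed
  also have "\<dots> = exp (t - alpha q m 2 * t^2/2 + (1/3) * alpha q m 3 * t^3)"
    using sum_taylor_terms[of t "1/3"] by (simp add: exp_sum[symmetric])
  finally have "exp (- t) * (\<Prod>i\<in>{1..m}. 1 + q i * t)
      \<le> exp (- t) * exp (t - alpha q m 2 * t^2/2 + (1/3) * alpha q m 3 * t^3)"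
    by simp
  then show ?thesis
    unfolding poisson_no_collision_def by (simp add: exp_add[symmetric])
qed

lemma poisson_no_collision_tail:
  assumes small: "\<And>i. i \<in> {1..m} \<Longrightarrow> q i * \<tau> \<le> 1" and \<tau>: "0 \<le> \<tau>" "\<tau> \<le> t"
  shows "poisson_no_collision q m t \<le> poisson_no_collision q m \<tau> * exp (- (alpha q m 2 * \<tau> / 2) * (t - \<tau>))"
proof -
  have slope: "(\<Sum>i\<in>{1..m}. (q i - q i^2 * \<tau> / 2) * (t - \<tau>)) = (1 - alpha q m 2 * \<tau> / 2) * (t - \<tau>)"
    using sum_eq_1 by (simp add: alpha_def sum_distrib_right sum_subtractf sum_divide_distrib[symmetric]
        sum_distrib_left[symmetric] mult_ac)
  have "(\<Prod>i\<in>{1..m}. 1 + q i * t) \<le> (\<Prod>i\<in>{1..m}. (1 + q i * \<tau>) * exp ((q i - q i^2 * \<tau> / 2) * (t - \<tau>)))"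
    using nonneg small \<tau> by (intro prod_mono conjI one_plus_mult_le_shifted) (auto intro!: add_nonneg_nonneg)
  also have "\<dots> = (\<Prod>i\<in>{1..m}. 1 + q i * \<tau>) * exp (\<Sum>i\<in>{1..m}. (q i - q i^2 * \<tau> / 2) * (t - \<tau>))"
    by (simp add: prod.distrib exp_sum)
  also have "\<dots> = (\<Prod>i\<in>{1..m}. 1 + q i * \<tau>) * exp ((1 - alpha q m 2 * \<tau> / 2) * (t - \<tau>))"
    unfolding slope ..
  finally have "exp (- t) * (\<Prod>i\<in>{1..m}. 1 + q i * t)
      \<le> (\<Prod>i\<in>{1..m}. 1 + q i * \<tau>) * (exp (- t) * exp ((1 - alpha q m 2 * \<tau> / 2) * (t - \<tau>)))"
    by (simp add: mult_ac)
  also have "exp (- t) * exp ((1 - alpha q m 2 * \<tau> / 2) * (t - \<tau>)) = exp (- \<tau>) * exp (- (alpha q m 2 * \<tau> / 2) * (t - \<tau>))"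
    by (simp add: exp_add[symmetric] algebra_simps)
  finally show ?thesis
    unfolding poisson_no_collision_def by (simp add: mult_ac)
qed

lemma poisson_no_collision_le_near:
  assumes "0 \<le> t" "t \<le> \<tau>"
  shows "poisson_no_collision q m t \<le> exp (alpha q m 3 * \<tau>^3 / 3) * exp (- alpha q m 2 * t^2 / 2)"
proof -
  have "alpha q m 3 * t^3 \<le> alpha q m 3 * \<tau>^3"
    using assms alpha_3_nonneg by (intro mult_left_mono power_mono) auto
  then have "exp (- alpha q m 2 * t^2/2 + alpha q m 3 * t^3/3) \<le> exp (alpha q m 3 * \<tau>^3 / 3) * exp (- alpha q m 2 * t^2 / 2)"
    by (simp add: exp_add[symmetric])
  with poisson_no_collision_le[OF assms(1)] show ?thesis by linarith
qed

lemma poisson_no_collision_le_far: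
  assumes small: "\<And>i. i \<in> {1..m} \<Longrightarrow> q i * \<tau> \<le> 1" and \<tau>: "0 \<le> \<tau>" "\<tau> \<le> t"
  shows "poisson_no_collision q m t \<le> exp (alpha q m 3 * \<tau>^3 / 3) * exp (- (alpha q m 2 * \<tau> / 2) * (t - \<tau>))"
proof -
  have "poisson_no_collision q m \<tau> \<le> exp (- alpha q m 2 * \<tau>^2/2 + alpha q m 3 * \<tau>^3/3)"
    using poisson_no_collision_le[OF \<tau>(1)] .
  also have "\<dots> \<le> exp (alpha q m 3 * \<tau>^3 / 3)"
    using alpha_2_pos by simp
  finally have "poisson_no_collision q m \<tau> * exp (- (alpha q m 2 * \<tau> / 2) * (t - \<tau>))
      \<le> exp (alpha q m 3 * \<tau>^3 / 3) * exp (- (alpha q m 2 * \<tau> / 2) * (t - \<tau>))"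
    by (intro mult_right_mono) auto
  with poisson_no_collision_tail[OF small \<tau>] show ?thesis by linarith
qed

lemma expected_B_ge: "sqrt (pi / (2 * alpha q m 2)) \<le> expected_B q m"
proof -
  have "ennreal (sqrt (pi / (2 * alpha q m 2))) = (\<integral>\<^sup>+t\<in>{0..}. ennreal (exp (- alpha q m 2 * t^2 / 2)) \<partial>lborel)"
    using nn_integral_gaussian_Ici[OF alpha_2_pos] ..
  also have "\<dots> \<le> (\<integral>\<^sup>+t\<in>{0..}. ennreal (poisson_no_collision q m t) \<partial>lborel)"
  proof (intro nn_integral_mono)
    fix t :: real
    show "ennreal (exp (- alpha q m 2 * t^2 / 2)) * indicator {0..} t \<le> ennreal (poisson_no_collision q m t) * indicator {0..} t"
      using poisson_no_collision_ge[of t] by (cases "0 \<le> t") (auto intro: ennreal_leI)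
  qed
  also have "\<dots> = ennreal (expected_B q m)"
    by (rule expected_B_eq_nn_integral[symmetric])
  finally have "ennreal (sqrt (pi / (2 * alpha q m 2))) \<le> ennreal (expected_B q m)" .
  moreover have "expected_B q m \<ge> 0"
    unfolding expected_B_def by (rule Bochner_Integration.integral_nonneg) simp
  ultimately show ?thesis by simp
qed

lemma expected_B_le:
  assumes small: "\<And>i. i \<in> {1..m} \<Longrightarrow> q i * \<tau> \<le> 1" and \<tau>: "\<tau> > 0"
  shows "expected_B q m
    \<le> exp (alpha q m 3 * \<tau>^3 / 3) * (sqrt (pi / (2 * alpha q m 2)) + 2 / (alpha q m 2 * \<tau>))"
proof -
  define a where "a = alpha q m 2"
  define c where "c = exp (alpha q m 3 * \<tau>^3 / 3)"
  define \<beta> where "\<beta> = a * \<tau> / 2"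
  have a: "a > 0" and \<beta>: "\<beta> > 0" and c: "c > 0"
    using alpha_2_pos \<tau> by (simp_all add: a_def \<beta>_def c_def)
  have envelope: "ennreal (poisson_no_collision q m t) * indicator {0..} t
      \<le> ennreal c * (ennreal (exp (- a * t^2 / 2)) * indicator {0..} t)
        + ennreal c * (ennreal (exp (- \<beta> * (t - \<tau>))) * indicator {\<tau>..} t)" for t
  proof (cases "0 \<le> t")
    case True
    show ?thesis
    proof (cases "t \<le> \<tau>")
      case True
      with \<open>0 \<le> t\<close> have "poisson_no_collision q m t \<le> c * exp (- a * t^2 / 2)"
        unfolding a_def c_def by (rule poisson_no_collision_le_near)
      then show ?thesis
        using \<open>0 \<le> t\<close> by (simp add: ennreal_mult[symmetric] ennreal_leI add_increasing2 c_def)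
    next
      case False
      with \<tau> have "poisson_no_collision q m t \<le> c * exp (- \<beta> * (t - \<tau>))"
        unfolding a_def c_def \<beta>_def using poisson_no_collision_le_far[OF small] by simp
      then show ?thesis
        using \<open>0 \<le> t\<close> False by (simp add: ennreal_mult[symmetric] ennreal_leI add_increasing c_def)
    qed
  qed simp
  have "ennreal (expected_B q m)
      \<le> (\<integral>\<^sup>+t. ennreal c * (ennreal (exp (- a * t^2 / 2)) * indicator {0..} t)
              + ennreal c * (ennreal (exp (- \<beta> * (t - \<tau>))) * indicator {\<tau>..} t) \<partial>lborel)"
    unfolding expected_B_eq_nn_integral by (intro nn_integral_mono envelope)
  also have "\<dots> = ennreal c * ennreal (sqrt (pi / (2 * a))) + ennreal c * ennreal (1 / \<beta>)"
    using nn_integral_gaussian_Ici[OF a] nn_integral_exp_Ici[OF \<beta>] by (simp add: nn_integral_add nn_integral_cmult)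
  also have "\<dots> = ennreal (c * sqrt (pi / (2 * a))) + ennreal (c * (1 / \<beta>))"
    using a \<beta> c ennreal_mult[of c "1 / \<beta>"] ennreal_mult[of c "sqrt (pi / (2 * a))"] by simp
  also have "\<dots> = ennreal (c * sqrt (pi / (2 * a)) + c * (1 / \<beta>))"
    by (rule ennreal_plus[symmetric]) (use a \<beta> c in auto)
  finally have "ennreal (expected_B q m) \<le> ennreal (c * sqrt (pi / (2 * a)) + c * (1 / \<beta>))" .
  moreover have "0 \<le> c * sqrt (pi / (2 * a)) + c * (1 / \<beta>)"
    using a \<beta> c by simp
  ultimately have "expected_B q m \<le> c * sqrt (pi / (2 * a)) + c * (1 / \<beta>)"
    by (simp add: ennreal_le_iff)
  then show ?thesis by (simp add: a_def c_def \<beta>_def distrib_left)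
qed

lemma expected_B_ratio_bounds:
  assumes small: "\<And>i. i \<in> {1..m} \<Longrightarrow> q i * \<tau> \<le> 1" and \<tau>: "\<tau> > 0"
  shows "1 \<le> expected_B q m / sqrt (pi / (2 * alpha q m 2))"
    and "expected_B q m / sqrt (pi / (2 * alpha q m 2))
      \<le> exp ((root 3 (alpha q m 3) * \<tau>)^3 / 3) * (1 + 2 * sqrt (2 / pi) / (sqrt (alpha q m 2) * \<tau>))"
proof -
  define a where "a = alpha q m 2"
  define G where "G = sqrt (pi / (2 * a))"
  have a: "a > 0" using alpha_2_pos by (simp add: a_def)
  then have G: "G > 0" by (simp add: G_def)
  show "1 \<le> expected_B q m / sqrt (pi / (2 * alpha q m 2))"
    using expected_B_ge G by (simp add: G_def a_def)
  have cube: "(root 3 (alpha q m 3) * \<tau>)^3 = alpha q m 3 * \<tau>^3"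
    using alpha_3_nonneg by (simp add: power_mult_distrib real_root_pow_pos2)
  have "a = sqrt a * sqrt a" using a by simp
  then have tail_ratio: "2 / (a * \<tau>) / G = 2 * sqrt (2 / pi) / (sqrt a * \<tau>)"
    using a \<tau> by (simp add: G_def real_sqrt_divide real_sqrt_mult field_simps)
  have "expected_B q m / G \<le> exp (alpha q m 3 * \<tau>^3 / 3) * (G + 2 / (a * \<tau>)) / G"
    using expected_B_le[OF small \<tau>] G by (simp add: G_def a_def divide_right_mono)
  also have "\<dots> = exp (alpha q m 3 * \<tau>^3 / 3) * (1 + 2 / (a * \<tau>) / G)"
    using G by (simp add: field_simps)
  also have "\<dots> = exp (alpha q m 3 * \<tau>^3 / 3) * (1 + 2 * sqrt (2 / pi) / (sqrt a * \<tau>))"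
    unfolding tail_ratio ..
  finally show "expected_B q m / sqrt (pi / (2 * alpha q m 2))
      \<le> exp ((root 3 (alpha q m 3) * \<tau>)^3 / 3) * (1 + 2 * sqrt (2 / pi) / (sqrt (alpha q m 2) * \<tau>))"
    unfolding cube G_def a_def .
qed

end

theorem theorem5:
  fixes p :: "nat \<Rightarrow> nat \<Rightarrow> real" and \<tau> :: "nat \<Rightarrow> real"
  assumes nonneg: "\<And>m i. m \<ge> 1 \<Longrightarrow> i \<in> {1..m} \<Longrightarrow> p m i \<ge> 0"
    and sum1: "\<And>m. m \<ge> 1 \<Longrightarrow> (\<Sum>i=1..m. p m i) = 1"
    and sorted: "\<And>m i j. m \<ge> 1 \<Longrightarrow> 1 \<le> i \<Longrightarrow> i \<le> j \<Longrightarrow> j \<le> m \<Longrightarrow> p m i \<le> p m j"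
    and tau_pos: "\<And>m. m \<ge> 1 \<Longrightarrow> \<tau> m > 0"
    and A: "\<And>m. m \<ge> 1 \<Longrightarrow> p m m * \<tau> m < 1"
    and B: "filterlim (\<lambda>m. sqrt (alpha (p m) m 2) * \<tau> m) at_top sequentially"
    and C: "(\<lambda>m. root 3 (alpha (p m) m 3) * \<tau> m) \<longlonglongrightarrow> 0"
  shows "(\<lambda>m. expected_B (p m) m) \<sim>[sequentially] (\<lambda>m. sqrt (pi / (2 * alpha (p m) m 2)))"
proof (rule asymp_equivI')
  let ?ratio = "\<lambda>m. expected_B (p m) m / sqrt (pi / (2 * alpha (p m) m 2))"
  let ?bound = "\<lambda>m. exp ((root 3 (alpha (p m) m 3) * \<tau> m)^3 / 3)
    * (1 + 2 * sqrt (2 / pi) / (sqrt (alpha (p m) m 2) * \<tau> m))"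
  have urn: "urn_distribution (p m) m" if "m \<ge> 1" for m
    using nonneg sum1 that by unfold_locales auto
  have small: "p m i * \<tau> m \<le> 1" if m: "m \<ge> 1" and i: "i \<in> {1..m}" for m i
  proof -
    have "p m i * \<tau> m \<le> p m m * \<tau> m"
      using sorted[of m i m] tau_pos[OF m] m i by (intro mult_right_mono) auto
    with A[OF m] show ?thesis by linarith
  qed
  have "?bound \<longlonglongrightarrow> exp (0^3 / 3) * (1 + 0)"
    using B by (intro tendsto_intros C tendsto_divide_0[OF tendsto_const] filterlim_at_top_imp_at_infinity) auto
  then have bound_lim: "?bound \<longlonglongrightarrow> 1" by simp
  have "1 \<le> ?ratio m" "?ratio m \<le> ?bound m" if "m \<ge> 1" for m
    using urn_distribution.expected_B_ratio_bounds[OF urn[OF that] small[OF that] tau_pos[OF that]] by auto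
  then have "eventually (\<lambda>m. 1 \<le> ?ratio m) sequentially" "eventually (\<lambda>m. ?ratio m \<le> ?bound m) sequentially"
    unfolding eventually_sequentially by blast+
  then show "?ratio \<longlonglongrightarrow> 1"
    using bound_lim by (rule tendsto_sandwich[OF _ _ tendsto_const])
qed

end
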